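(* Let $k$ be a field of characteristic $p>2$ ($p$ prime). Let $m\ge1$ and $\alpha_1,\ldots,\alpha_{2m}\in k$. Then $$w_m(x_1+\alpha_1,x_2+\alpha_2,\ldots,x_{2m}+\alpha_{2m})\equiv w_m\pmod{S^2+T^{(3)}}.$$
   Context: $X=\{x_i\mid i\ge0\}$ countably infinite; $k_1\langle X\rangle$ the free unitary associative $k$-algebra on $X$. $[a,b]=ab-ba$, $[a,b,c]=[[a,b],c]$. A $T$-space is a subspace invariant under all endomorphisms of $k_1\langle X\rangle$, a $T$-ideal is a $T$-space that is an ideal. $T^{(3)}$ is the $T$-ideal generated by $[x_1,x_2,x_3]$, $S^2$ the $T$-space generated by $[x_1,x_2]$. $\kappa(u,v)=[u,v]u^{p-1}v^{p-1}$, $w_m=\prod_{r=1}^m\kappa(x_{2r-1},x_{2r})$, and $w_m(u_1,\ldots,u_{2m})$ is the image of $w_m$ under $x_j\mapsto u_j$. *)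

theory Defs
  imports Main "HOL-Computational_Algebra.Primes"
begin

text \<open>The free unitary associative k-algebra k_1<X> on X = {x_i | i >= 0}, modelled as
  finitely supported functions from words (lists of variable indices) to coefficients.
  The word [i1,...,in] stands for the monomial x_i1 ... x_in.\<close>

type_synonym 'k fa = "nat list \<Rightarrow> 'k"

definition FA :: "'k::field fa set" where
  "FA = {f. finite {w. f w \<noteq> 0}}"

definition fa_zero :: "'k::field fa" where
  "fa_zero = (\<lambda>w. 0)"

definition fa_one :: "'k::field fa" where
  "fa_one = (\<lambda>w. if w = [] then 1 else 0)"

definition fa_var :: "nat \<Rightarrow> 'k::field fa" where
  "fa_var i = (\<lambda>w. if w = [i] then 1 else 0)"

definition fa_add :: "'k::field fa \<Rightarrow> 'k fa \<Rightarrow> 'k fa" where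
  "fa_add f g = (\<lambda>w. f w + g w)"

definition fa_sub :: "'k::field fa \<Rightarrow> 'k fa \<Rightarrow> 'k fa" where
  "fa_sub f g = (\<lambda>w. f w - g w)"

definition fa_smul :: "'k::field \<Rightarrow> 'k fa \<Rightarrow> 'k fa" where
  "fa_smul c f = (\<lambda>w. c * f w)"

definition fa_mult :: "'k::field fa \<Rightarrow> 'k fa \<Rightarrow> 'k fa" where
  "fa_mult f g = (\<lambda>w. \<Sum>i\<le>length w. f (take i w) * g (drop i w))"

fun fa_pow :: "'k::field fa \<Rightarrow> nat \<Rightarrow> 'k fa" where
  "fa_pow f 0 = fa_one"
| "fa_pow f (Suc n) = fa_mult f (fa_pow f n)"

fun fa_prod_list :: "'k::field fa list \<Rightarrow> 'k fa" where
  "fa_prod_list [] = fa_one"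
| "fa_prod_list (f # fs) = fa_mult f (fa_prod_list fs)"

definition fa_comm :: "'k::field fa \<Rightarrow> 'k fa \<Rightarrow> 'k fa" where
  "fa_comm a b = fa_sub (fa_mult a b) (fa_mult b a)"

definition fa_endo :: "('k::field fa \<Rightarrow> 'k fa) \<Rightarrow> bool" where
  "fa_endo h \<longleftrightarrow> (\<forall>f\<in>FA. h f \<in> FA)
     \<and> (\<forall>f\<in>FA. \<forall>g\<in>FA. h (fa_add f g) = fa_add (h f) (h g))
     \<and> (\<forall>c. \<forall>f\<in>FA. h (fa_smul c f) = fa_smul c (h f))
     \<and> (\<forall>f\<in>FA. \<forall>g\<in>FA. h (fa_mult f g) = fa_mult (h f) (h g))
     \<and> h fa_one = fa_one"

definition fa_subspace :: "'k::field fa set \<Rightarrow> bool" where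
  "fa_subspace V \<longleftrightarrow> V \<subseteq> FA \<and> fa_zero \<in> V
     \<and> (\<forall>f\<in>V. \<forall>g\<in>V. fa_add f g \<in> V) \<and> (\<forall>c. \<forall>f\<in>V. fa_smul c f \<in> V)"

definition T_space :: "'k::field fa set \<Rightarrow> bool" where
  "T_space V \<longleftrightarrow> fa_subspace V \<and> (\<forall>h. fa_endo h \<longrightarrow> h ` V \<subseteq> V)"

definition T_ideal :: "'k::field fa set \<Rightarrow> bool" where
  "T_ideal V \<longleftrightarrow> T_space V
     \<and> (\<forall>f\<in>V. \<forall>g\<in>FA. fa_mult f g \<in> V \<and> fa_mult g f \<in> V)"

definition T_space_gen :: "'k::field fa set \<Rightarrow> 'k fa set" where
  "T_space_gen S = \<Inter>{V. T_space V \<and> S \<subseteq> V}"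

definition T_ideal_gen :: "'k::field fa set \<Rightarrow> 'k fa set" where
  "T_ideal_gen S = \<Inter>{V. T_ideal V \<and> S \<subseteq> V}"

definition S2 :: "'k::field fa set" where
  "S2 = T_space_gen {fa_comm (fa_var 1) (fa_var 2)}"

definition T3 :: "'k::field fa set" where
  "T3 = T_ideal_gen {fa_comm (fa_comm (fa_var 1) (fa_var 2)) (fa_var 3)}"

definition set_sum :: "'k::field fa set \<Rightarrow> 'k fa set \<Rightarrow> 'k fa set" where
  "set_sum A B = {fa_add a b | a b. a \<in> A \<and> b \<in> B}"

definition kappa :: "'k::field fa \<Rightarrow> 'k fa \<Rightarrow> 'k fa" where
  "kappa u v = fa_mult (fa_comm u v)
     (fa_mult (fa_pow u (CHAR('k) - 1)) (fa_pow v (CHAR('k) - 1)))"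

definition w_gen :: "nat \<Rightarrow> (nat \<Rightarrow> 'k::field fa) \<Rightarrow> 'k fa" where
  "w_gen m u = fa_prod_list (map (\<lambda>r. kappa (u (2*r - 1)) (u (2*r))) [1..<m+1])"

end

theory Submission
  imports Defs
begin

text \<open>
  Write \<open>S\<close> for \<open>S^2\<close> and \<open>I\<close> for \<open>T^(3)\<close>. Modulo \<open>I\<close> every commutator is central, and
  the identity \<open>[a,d][b,c] + [a,c][b,d] \<equiv> 0 (mod I)\<close> gives \<open>[u,v][u,t] \<equiv> [u,v][v,t] \<equiv> 0\<close>;
  hence \<open>\<kappa>(u,v)\<close> is central modulo \<open>I\<close>. For \<open>z\<close> central modulo \<open>I\<close> and \<open>i < p - 1\<close>, the
  commutator \<open>[u^(i+1) v^j z, v] \<in> S\<close> is congruent to \<open>(i+1) [u,v] u^i v^j z\<close> modulo \<open>I\<close>, and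
  \<open>i + 1\<close> is invertible in \<open>k\<close>; so \<open>[u,v] u^i v^j z \<in> S + I\<close>, and symmetrically when
  \<open>j < p - 1\<close>. Expanding \<open>(u+\<alpha>)^(p-1)\<close> and \<open>(v+\<beta>)^(p-1)\<close>, the difference
  \<open>\<kappa>(u+\<alpha>,v+\<beta>) - \<kappa>(u,v)\<close> is \<open>[u,v]\<close> times a combination of monomials \<open>u^i v^j\<close> with
  \<open>i < p - 1\<close> or \<open>j < p - 1\<close>. Telescoping over the central factors of \<open>w_m\<close> finishes the proof.
\<close>

section \<open>The free algebra as a ring\<close>

definition splits :: "nat list \<Rightarrow> (nat list \<times> nat list) set" where
  "splits w = {(u, v). u @ v = w}"

lemma splits_eq_image: "splits w = (\<lambda>i. (take i w, drop i w)) ` {..length w}"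
proof -
  have "(u, v) \<in> (\<lambda>i. (take i w, drop i w)) ` {..length w}" if "u @ v = w" for u v
    using that by (intro image_eqI[where x = "length u"]) auto
  then show ?thesis unfolding splits_def by auto
qed

lemma finite_splits [simp]: "finite (splits w)"
  by (simp add: splits_eq_image)

lemma fa_mult_eq_sum_splits: "fa_mult f g w = (\<Sum>(u, v)\<in>splits w. f u * g v)"
proof -
  have "inj_on (\<lambda>i. (take i w, drop i w)) {..length w}"
    by (rule inj_onI) (metis Pair_inject atMost_iff length_take min.absorb2)
  then show ?thesis
    unfolding fa_mult_def splits_eq_image by (simp add: sum.reindex)
qed

lemma FA_add: "f \<in> FA \<Longrightarrow> g \<in> FA \<Longrightarrow> fa_add f g \<in> FA"
  unfolding FA_def fa_add_def
  by (auto intro: rev_finite_subset[of "{w. f w \<noteq> 0} \<union> {w. g w \<noteq> 0}"])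

lemma FA_sub: "f \<in> FA \<Longrightarrow> g \<in> FA \<Longrightarrow> fa_sub f g \<in> FA"
  unfolding FA_def fa_sub_def
  by (auto intro: rev_finite_subset[of "{w. f w \<noteq> 0} \<union> {w. g w \<noteq> 0}"])

lemma FA_smul: "f \<in> FA \<Longrightarrow> fa_smul c f \<in> FA"
  unfolding FA_def fa_smul_def by (auto elim: rev_finite_subset)

lemma FA_zero: "fa_zero \<in> FA"
  unfolding FA_def fa_zero_def by simp

lemma FA_one: "fa_one \<in> FA"
  unfolding FA_def fa_one_def by simp

lemma FA_var: "fa_var i \<in> FA"
  unfolding FA_def fa_var_def by simp

lemma FA_mult:
  assumes "f \<in> FA" "g \<in> FA"
  shows "fa_mult f g \<in> FA"
proof -
  let ?A = "{w. f w \<noteq> 0}" and ?B = "{w. g w \<noteq> 0}"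
  have "{w. fa_mult f g w \<noteq> 0} \<subseteq> (\<lambda>(u, v). u @ v) ` (?A \<times> ?B)"
  proof
    fix w assume "w \<in> {w. fa_mult f g w \<noteq> 0}"
    then obtain u v where "(u, v) \<in> splits w" "f u * g v \<noteq> 0"
      by (auto simp: fa_mult_eq_sum_splits elim: sum.not_neutral_contains_not_neutral)
    then show "w \<in> (\<lambda>(u, v). u @ v) ` (?A \<times> ?B)"
      unfolding splits_def by force
  qed
  moreover have "finite ((\<lambda>(u, v). u @ v) ` (?A \<times> ?B))"
    using assms unfolding FA_def by auto
  ultimately show ?thesis
    unfolding FA_def by (blast intro: finite_subset)
qed

lemma fa_mult_assoc: "fa_mult (fa_mult f g) h = fa_mult f (fa_mult g h)"
proof
  fix w
  have "fa_mult (fa_mult f g) h w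
      = (\<Sum>((s, t), (u, v))\<in>Sigma (splits w) (\<lambda>(s, t). splits s). f u * g v * h t)"
    by (simp add: fa_mult_eq_sum_splits sum_distrib_right sum.Sigma case_prod_unfold)
  also have "\<dots> = (\<Sum>((u, r), (v, t))\<in>Sigma (splits w) (\<lambda>(u, r). splits r). f u * (g v * h t))"
    by (rule sum.reindex_bij_witness[where i = "\<lambda>((u, r), (v, t)). ((u @ v, t), (u, v))"
          and j = "\<lambda>((s, t), (u, v)). ((u, v @ t), (v, t))"])
      (auto simp: splits_def mult.assoc)
  also have "\<dots> = fa_mult f (fa_mult g h) w"
    by (simp add: fa_mult_eq_sum_splits sum_distrib_left sum.Sigma case_prod_unfold)
  finally show "fa_mult (fa_mult f g) h w = fa_mult f (fa_mult g h) w" .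
qed

lemma fa_mult_add_left: "fa_mult (fa_add f g) h = fa_add (fa_mult f h) (fa_mult g h)"
  by (simp add: fun_eq_iff fa_mult_def fa_add_def distrib_right sum.distrib)

lemma fa_mult_add_right: "fa_mult h (fa_add f g) = fa_add (fa_mult h f) (fa_mult h g)"
  by (simp add: fun_eq_iff fa_mult_def fa_add_def distrib_left sum.distrib)

lemma fa_mult_smul_left: "fa_mult (fa_smul c f) h = fa_smul c (fa_mult f h)"
  by (simp add: fun_eq_iff fa_mult_def fa_smul_def sum_distrib_left mult.assoc)

lemma fa_mult_smul_right: "fa_mult h (fa_smul c f) = fa_smul c (fa_mult h f)"
  by (simp add: fun_eq_iff fa_mult_def fa_smul_def sum_distrib_left mult.left_commute)

lemma fa_mult_one_left: "fa_mult fa_one f = f"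
proof
  fix w
  have "fa_mult fa_one f w = (\<Sum>p\<in>splits w. if p = ([], w) then f w else 0)"
    unfolding fa_mult_eq_sum_splits fa_one_def
    by (rule sum.cong) (auto simp: splits_def split: if_splits)
  also have "\<dots> = f w"
    by (simp only: sum.delta[OF finite_splits]) (simp add: splits_def)
  finally show "fa_mult fa_one f w = f w" .
qed

lemma fa_mult_one_right: "fa_mult f fa_one = f"
proof
  fix w
  have "fa_mult f fa_one w = (\<Sum>p\<in>splits w. if p = (w, []) then f w else 0)"
    unfolding fa_mult_eq_sum_splits fa_one_def
    by (rule sum.cong) (auto simp: splits_def split: if_splits)
  also have "\<dots> = f w"
    by (simp only: sum.delta[OF finite_splits]) (simp add: splits_def)
  finally show "fa_mult f fa_one w = f w" .
qed

typedef (overloaded) ('k::field) free_alg = "FA :: 'k fa set"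
  using FA_zero by blast

setup_lifting type_definition_free_alg

instantiation free_alg :: (field) ring_1
begin

lift_definition zero_free_alg :: "'a free_alg" is fa_zero by (rule FA_zero)
lift_definition one_free_alg :: "'a free_alg" is fa_one by (rule FA_one)
lift_definition plus_free_alg :: "'a free_alg \<Rightarrow> 'a free_alg \<Rightarrow> 'a free_alg"
  is fa_add by (rule FA_add)
lift_definition minus_free_alg :: "'a free_alg \<Rightarrow> 'a free_alg \<Rightarrow> 'a free_alg"
  is fa_sub by (rule FA_sub)
lift_definition uminus_free_alg :: "'a free_alg \<Rightarrow> 'a free_alg"
  is "fa_smul (-1)" by (rule FA_smul)
lift_definition times_free_alg :: "'a free_alg \<Rightarrow> 'a free_alg \<Rightarrow> 'a free_alg"
  is fa_mult by (rule FA_mult)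

instance
proof
  fix a b c :: "'a free_alg"
  show "a + b + c = a + (b + c)" by transfer (simp add: fa_add_def add.assoc)
  show "a + b = b + a" by transfer (simp add: fa_add_def add.commute)
  show "0 + a = a" by transfer (simp add: fa_add_def fa_zero_def)
  show "- a + a = 0" by transfer (simp add: fa_add_def fa_zero_def fa_smul_def)
  show "a - b = a + - b" by transfer (simp add: fa_add_def fa_sub_def fa_smul_def)
  show "a * b * c = a * (b * c)" by transfer (rule fa_mult_assoc)
  show "1 * a = a" by transfer (rule fa_mult_one_left)
  show "a * 1 = a" by transfer (rule fa_mult_one_right)
  show "(a + b) * c = a * c + b * c" by transfer (rule fa_mult_add_left)
  show "a * (b + c) = a * b + a * c" by transfer (rule fa_mult_add_right)
  show "(0::'a free_alg) \<noteq> 1" by transfer (simp add: fa_zero_def fa_one_def fun_eq_iff)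
qed

end

lift_definition var :: "nat \<Rightarrow> 'k::field free_alg" is fa_var by (rule FA_var)

lift_definition scalar :: "'k::field \<Rightarrow> 'k free_alg" is "\<lambda>c. fa_smul c fa_one"
  by (rule FA_smul[OF FA_one])

lemma Rep_free_alg_power: "Rep_free_alg (a ^ n) = fa_pow (Rep_free_alg a) n"
  by (induction n) (simp_all add: one_free_alg.rep_eq times_free_alg.rep_eq)

lemma Rep_free_alg_prod_list:
  "Rep_free_alg (prod_list xs) = fa_prod_list (map Rep_free_alg xs)"
  by (induction xs) (simp_all add: one_free_alg.rep_eq times_free_alg.rep_eq)

lemma Rep_free_alg_scalar_mult: "Rep_free_alg (scalar c * a) = fa_smul c (Rep_free_alg a)"
  by transfer (simp add: fa_mult_smul_left fa_mult_one_left)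

lemma scalar_mult_commute: "scalar c * a = a * scalar c"
  by transfer (simp add: fa_mult_smul_left fa_mult_smul_right fa_mult_one_left fa_mult_one_right)

lemma scalar_mult_left_commute: "a * (scalar c * b) = scalar c * (a * b)"
  by (metis mult.assoc scalar_mult_commute)

lemma scalar_mult: "scalar (c * d) = scalar c * scalar d"
  by transfer (simp only: fa_mult_smul_left fa_mult_one_left, simp add: fa_smul_def mult.assoc)

lemma mult_scalar_mult_scalar: "scalar c * a * (scalar d * b) = scalar (c * d) * (a * b)"
  by (simp only: scalar_mult mult.assoc scalar_mult_left_commute[of a])

lemma scalar_add: "scalar (c + d) = scalar c + scalar d"
  by transfer (simp add: fa_smul_def fa_add_def distrib_right)

lemma scalar_zero [simp]: "scalar 0 = 0"
  by transfer (simp add: fa_smul_def fa_zero_def)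

lemma scalar_one [simp]: "scalar 1 = 1"
  by transfer (simp add: fa_smul_def)

lemma scalar_of_nat: "scalar (of_nat n) = of_nat n"
  by (induction n) (simp_all add: scalar_add)

section \<open>Substitution endomorphisms\<close>

definition supp :: "'k::field free_alg \<Rightarrow> nat list set" where
  "supp x = {w. Rep_free_alg x w \<noteq> 0}"

lemma finite_supp [simp]: "finite (supp x)"
  using Rep_free_alg[of x] unfolding supp_def FA_def by simp

definition subst :: "(nat \<Rightarrow> 'k::field free_alg) \<Rightarrow> 'k free_alg \<Rightarrow> 'k free_alg" where
  "subst \<sigma> x = (\<Sum>w\<in>supp x. scalar (Rep_free_alg x w) * prod_list (map \<sigma> w))"

lemma subst_eq_sum_superset:
  assumes "finite A" "supp x \<subseteq> A"
  shows "subst \<sigma> x = (\<Sum>w\<in>A. scalar (Rep_free_alg x w) * prod_list (map \<sigma> w))"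
  unfolding subst_def using assms
  by (intro sum.mono_neutral_left) (auto simp: supp_def)

lemma scalar_sum: "scalar (sum f A) = (\<Sum>a\<in>A. scalar (f a))"
  by (induction A rule: infinite_finite_induct) (simp_all add: scalar_add)

lemma subst_add: "subst \<sigma> (x + y) = subst \<sigma> x + subst \<sigma> y"
proof -
  have "supp (x + y) \<subseteq> supp x \<union> supp y"
    by (auto simp: supp_def plus_free_alg.rep_eq fa_add_def)
  then show ?thesis
    by (simp add: subst_eq_sum_superset[of "supp x \<union> supp y"] plus_free_alg.rep_eq fa_add_def
        scalar_add distrib_right sum.distrib)
qed

lemma subst_zero: "subst \<sigma> 0 = 0"
  by (simp add: subst_def supp_def zero_free_alg.rep_eq fa_zero_def)

lemma subst_uminus: "subst \<sigma> (- x) = - subst \<sigma> x"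
  using subst_add[of \<sigma> x "- x"] by (simp add: subst_zero eq_neg_iff_add_eq_0 add.commute)

lemma subst_diff: "subst \<sigma> (x - y) = subst \<sigma> x - subst \<sigma> y"
  using subst_add[of \<sigma> x "- y"] by (simp add: subst_uminus)

lemma subst_scalar_mult: "subst \<sigma> (scalar c * x) = scalar c * subst \<sigma> x"
proof -
  have "supp (scalar c * x) \<subseteq> supp x"
    by (auto simp: supp_def Rep_free_alg_scalar_mult fa_smul_def)
  then have "subst \<sigma> (scalar c * x)
      = (\<Sum>w\<in>supp x. scalar (Rep_free_alg (scalar c * x) w) * prod_list (map \<sigma> w))"
    by (rule subst_eq_sum_superset[OF finite_supp])
  then show ?thesis
    by (simp add: subst_def Rep_free_alg_scalar_mult
        fa_smul_def scalar_mult sum_distrib_left mult.assoc)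
qed

lemma subst_one: "subst \<sigma> 1 = 1"
proof -
  have supp_one: "supp (1::'k::field free_alg) = {[]}"
    by (auto simp: supp_def one_free_alg.rep_eq fa_one_def)
  show ?thesis by (simp add: supp_one subst_def one_free_alg.rep_eq fa_one_def)
qed

lemma subst_var: "subst \<sigma> (var i) = \<sigma> i"
proof -
  have supp_var: "supp (var i :: 'k::field free_alg) = {[i]}"
    by (auto simp: supp_def var.rep_eq fa_var_def)
  show ?thesis by (simp add: supp_var subst_def var.rep_eq fa_var_def)
qed

lemma subst_mult: "subst \<sigma> (x * y) = subst \<sigma> x * subst \<sigma> y"
proof -
  let ?X = "Rep_free_alg x" and ?Y = "Rep_free_alg y"
  let ?m = "\<lambda>w. prod_list (map \<sigma> w)"
  let ?C = "(\<lambda>(u, v). u @ v) ` (supp x \<times> supp y)"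
  have supp_mult: "supp (x * y) \<subseteq> ?C"
  proof
    fix w assume "w \<in> supp (x * y)"
    then obtain u v where "(u, v) \<in> splits w" "?X u * ?Y v \<noteq> 0"
      by (auto simp: supp_def times_free_alg.rep_eq fa_mult_eq_sum_splits
          elim: sum.not_neutral_contains_not_neutral)
    then show "w \<in> ?C" unfolding splits_def supp_def by force
  qed
  let ?F = "\<lambda>p. scalar (?X (fst p) * ?Y (snd p)) * ?m (fst p @ snd p)"
  have "subst \<sigma> (x * y) = (\<Sum>w\<in>?C. \<Sum>p\<in>splits w. scalar (?X (fst p) * ?Y (snd p)) * ?m w)"
    by (simp add: subst_eq_sum_superset[OF _ supp_mult] times_free_alg.rep_eq fa_mult_eq_sum_splits
        scalar_sum sum_distrib_right case_prod_unfold)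
  also have "\<dots> = (\<Sum>w\<in>?C. \<Sum>p\<in>{p\<in>supp x \<times> supp y. fst p @ snd p = w}. ?F p)"
  proof (rule sum.cong[OF refl])
    fix w
    have "(\<Sum>p\<in>splits w. scalar (?X (fst p) * ?Y (snd p)) * ?m w)
        = (\<Sum>p\<in>{p\<in>supp x \<times> supp y. fst p @ snd p = w}. scalar (?X (fst p) * ?Y (snd p)) * ?m w)"
      by (rule sum.mono_neutral_right[OF finite_splits]) (auto simp: splits_def supp_def)
    then show "(\<Sum>p\<in>splits w. scalar (?X (fst p) * ?Y (snd p)) * ?m w)
        = (\<Sum>p\<in>{p\<in>supp x \<times> supp y. fst p @ snd p = w}. ?F p)"
      by simp
  qed
  also have "\<dots> = (\<Sum>p\<in>supp x \<times> supp y. ?F p)"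
    by (rule sum.group) auto
  also have "\<dots> = (\<Sum>u\<in>supp x. \<Sum>v\<in>supp y. (scalar (?X u) * ?m u) * (scalar (?Y v) * ?m v))"
    by (simp add: sum.cartesian_product mult_scalar_mult_scalar case_prod_unfold)
  also have "\<dots> = subst \<sigma> x * subst \<sigma> y"
    by (simp add: subst_def sum_distrib_left sum_distrib_right sum.swap[of _ "supp y"])
  finally show ?thesis .
qed

lemma subst_in_T_space:
  fixes \<sigma> :: "nat \<Rightarrow> 'k::field free_alg"
  assumes "T_space V" "Rep_free_alg x \<in> V"
  shows "Rep_free_alg (subst \<sigma> x) \<in> V"
proof -
  let ?h = "\<lambda>f. Rep_free_alg (subst \<sigma> (Abs_free_alg f))"
  have "fa_endo ?h"
    unfolding fa_endo_def
  proof (intro conjI ballI allI)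
    fix f g :: "'k fa" and c :: 'k
    assume "f \<in> FA" "g \<in> FA"
    then show "?h (fa_add f g) = fa_add (?h f) (?h g)"
      by (simp flip: plus_free_alg.abs_eq
          add: eq_onp_same_args subst_add plus_free_alg.rep_eq)
    from \<open>f \<in> FA\<close> \<open>g \<in> FA\<close> show "?h (fa_mult f g) = fa_mult (?h f) (?h g)"
      by (simp flip: times_free_alg.abs_eq
          add: eq_onp_same_args subst_mult times_free_alg.rep_eq)
    have "Abs_free_alg (fa_smul c f) = scalar c * Abs_free_alg f"
      using \<open>f \<in> FA\<close>
      by (metis Abs_free_alg_inverse Rep_free_alg_inverse Rep_free_alg_scalar_mult)
    then show "?h (fa_smul c f) = fa_smul c (?h f)"
      by (simp add: subst_scalar_mult Rep_free_alg_scalar_mult)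
  qed (simp_all add: Rep_free_alg subst_one one_free_alg.rep_eq flip: one_free_alg.abs_eq)
  then have "?h (Rep_free_alg x) \<in> V"
    using assms unfolding T_space_def by blast
  then show ?thesis by (simp add: Rep_free_alg_inverse)
qed

definition commutator :: "'a::ring \<Rightarrow> 'a \<Rightarrow> 'a" where
  "commutator a b = a * b - b * a"

lemma commutator_add_left: "commutator (a + b) c = commutator a c + commutator b c"
  by (simp add: commutator_def algebra_simps)

lemma commutator_add_right: "commutator a (b + c) = commutator a b + commutator a c"
  by (simp add: commutator_def algebra_simps)

lemma commutator_mult_left: "commutator (a * b) t = a * commutator b t + commutator a t * b"
  by (simp add: commutator_def algebra_simps)

lemma commutator_antisym: "commutator b a = - commutator a b"
  by (simp add: commutator_def)

lemma commutator_product_identity: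
  "commutator a d * commutator b c + commutator a c * commutator b d
     = commutator (commutator (a * b) c) d - a * commutator (commutator b c) d
       - commutator (commutator a c) d * b"
  by (simp add: commutator_def algebra_simps)

lemma Rep_free_alg_commutator:
  "Rep_free_alg (commutator a b) = fa_comm (Rep_free_alg a) (Rep_free_alg b)"
  by (simp add: commutator_def fa_comm_def minus_free_alg.rep_eq times_free_alg.rep_eq)

lemma subst_commutator: "subst \<sigma> (commutator a b) = commutator (subst \<sigma> a) (subst \<sigma> b)"
  by (simp add: commutator_def subst_diff subst_mult)

section \<open>The subspaces \<open>S^2\<close> and \<open>T^(3)\<close>\<close>

definition S_alg :: "'k::field free_alg set" where
  "S_alg = {x. Rep_free_alg x \<in> S2}"

definition I_alg :: "'k::field free_alg set" where
  "I_alg = {x. Rep_free_alg x \<in> T3}"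

lemma commutator_in_S_alg: "commutator a b \<in> S_alg"
proof -
  let ?\<sigma> = "\<lambda>i. if i = 1 then a else b"
  have "subst ?\<sigma> (commutator (var 1) (var 2)) = commutator a b"
    by (simp add: subst_commutator subst_var)
  moreover have "Rep_free_alg (subst ?\<sigma> (commutator (var 1) (var 2))) \<in> V"
    if "T_space V" "fa_comm (fa_var 1) (fa_var 2) \<in> V" for V
    using that by (intro subst_in_T_space) (simp_all add: Rep_free_alg_commutator var.rep_eq)
  ultimately show ?thesis
    unfolding S_alg_def S2_def T_space_gen_def by auto
qed

lemma commutator3_in_I_alg: "commutator (commutator a b) c \<in> I_alg"
proof -
  let ?\<sigma> = "\<lambda>i. if i = 1 then a else if i = 2 then b else c"
  let ?g = "commutator (commutator (var 1) (var 2)) (var 3)"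
  have "subst ?\<sigma> ?g = commutator (commutator a b) c"
    by (simp add: subst_commutator subst_var)
  moreover have "Rep_free_alg (subst ?\<sigma> ?g) \<in> V"
    if "T_ideal V" "fa_comm (fa_comm (fa_var 1) (fa_var 2)) (fa_var 3) \<in> V" for V
    using that unfolding T_ideal_def
    by (intro subst_in_T_space) (simp_all add: Rep_free_alg_commutator var.rep_eq)
  ultimately show ?thesis
    unfolding I_alg_def T3_def T_ideal_gen_def by auto
qed

lemma S_alg_add: "x \<in> S_alg \<Longrightarrow> y \<in> S_alg \<Longrightarrow> x + y \<in> S_alg"
  unfolding S_alg_def S2_def T_space_gen_def T_space_def fa_subspace_def
  by (auto simp: plus_free_alg.rep_eq)

lemma S_alg_scalar_mult: "x \<in> S_alg \<Longrightarrow> scalar c * x \<in> S_alg"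
  unfolding S_alg_def S2_def T_space_gen_def T_space_def fa_subspace_def
  by (auto simp: Rep_free_alg_scalar_mult)

lemma I_alg_add: "x \<in> I_alg \<Longrightarrow> y \<in> I_alg \<Longrightarrow> x + y \<in> I_alg"
  unfolding I_alg_def T3_def T_ideal_gen_def T_ideal_def T_space_def fa_subspace_def
  by (auto simp: plus_free_alg.rep_eq)

lemma I_alg_uminus: "x \<in> I_alg \<Longrightarrow> - x \<in> I_alg"
  unfolding I_alg_def T3_def T_ideal_gen_def T_ideal_def T_space_def fa_subspace_def
  by (auto simp: uminus_free_alg.rep_eq)

lemma I_alg_diff: "x \<in> I_alg \<Longrightarrow> y \<in> I_alg \<Longrightarrow> x - y \<in> I_alg"
  using I_alg_add I_alg_uminus by (metis diff_conv_add_uminus)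

lemma I_alg_mult_left: "x \<in> I_alg \<Longrightarrow> y * x \<in> I_alg"
  unfolding I_alg_def T3_def T_ideal_gen_def T_ideal_def
  using Rep_free_alg[of y] by (auto simp: times_free_alg.rep_eq)

lemma I_alg_mult_right: "x \<in> I_alg \<Longrightarrow> x * y \<in> I_alg"
  unfolding I_alg_def T3_def T_ideal_gen_def T_ideal_def
  using Rep_free_alg[of y] by (auto simp: times_free_alg.rep_eq)

lemma zero_in_I_alg: "0 \<in> I_alg"
  using commutator3_in_I_alg[of 0 0 0] by (simp add: commutator_def)

section \<open>Centrality modulo \<open>T^(3)\<close>\<close>

lemma commutator_product_sum_in_I_alg:
  "commutator a d * commutator b c + commutator a c * commutator b d \<in> I_alg"
  unfolding commutator_product_identity
  by (intro I_alg_diff I_alg_mult_left I_alg_mult_right commutator3_in_I_alg)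

lemma commutator_mult_commutator_left_in_I_alg: "commutator y z * commutator y t \<in> I_alg"
proof -
  have "commutator y z * commutator t y \<in> I_alg"
    using commutator_product_sum_in_I_alg[of y z t y] by (simp add: commutator_def)
  then show ?thesis
    using I_alg_uminus by (fastforce simp: commutator_antisym[of t y])
qed

lemma commutator_mult_commutator_right_in_I_alg: "commutator y z * commutator z t \<in> I_alg"
  using I_alg_uminus[OF commutator_mult_commutator_left_in_I_alg[of z y t]]
  by (simp add: commutator_antisym[of z y])

definition central_mod_I :: "'k::field free_alg set" where
  "central_mod_I = {z. \<forall>t. commutator z t \<in> I_alg}"

lemma commutator_in_central_mod_I: "commutator a b \<in> central_mod_I"
  unfolding central_mod_I_def using commutator3_in_I_alg by blast

lemma one_in_central_mod_I: "1 \<in> central_mod_I"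
  unfolding central_mod_I_def commutator_def using zero_in_I_alg by simp

lemma central_mod_I_mult: "a \<in> central_mod_I \<Longrightarrow> b \<in> central_mod_I \<Longrightarrow> a * b \<in> central_mod_I"
  unfolding central_mod_I_def
  by (simp add: commutator_mult_left I_alg_add I_alg_mult_left I_alg_mult_right)

lemma central_mod_I_prod_list:
  "(\<And>x. x \<in> set xs \<Longrightarrow> x \<in> central_mod_I) \<Longrightarrow> prod_list xs \<in> central_mod_I"
  by (induction xs) (simp_all add: one_in_central_mod_I central_mod_I_mult)

lemma central_mod_I_commute: "z \<in> central_mod_I \<Longrightarrow> z * x - x * z \<in> I_alg"
  unfolding central_mod_I_def commutator_def by blast

lemma central_mod_I_commutator_right: "z \<in> central_mod_I \<Longrightarrow> commutator u z \<in> I_alg"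
proof -
  assume "z \<in> central_mod_I"
  then have "- commutator z u \<in> I_alg"
    unfolding central_mod_I_def by (blast intro: I_alg_uminus)
  then show ?thesis by (simp add: commutator_antisym[of z u])
qed

definition annihilates_commutators :: "'k::field free_alg \<Rightarrow> 'k free_alg \<Rightarrow> bool" where
  "annihilates_commutators c g \<longleftrightarrow> (\<forall>t. c * commutator g t \<in> I_alg)"

lemma annihilates_commutators_one: "annihilates_commutators c 1"
  unfolding annihilates_commutators_def commutator_def using zero_in_I_alg by simp

lemma annihilates_commutators_mult:
  assumes "c \<in> central_mod_I" "annihilates_commutators c g" "annihilates_commutators c h"
  shows "annihilates_commutators c (g * h)"
  unfolding annihilates_commutators_def
proof
  fix t
  have "c * commutator (g * h) t
      = (c * g - g * c) * commutator h t + g * (c * commutator h t) + c * commutator g t * h"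
    by (simp add: commutator_mult_left algebra_simps)
  also have "\<dots> \<in> I_alg"
    using assms unfolding annihilates_commutators_def
    by (intro I_alg_add[OF I_alg_add] I_alg_mult_right[OF central_mod_I_commute]
        I_alg_mult_left[of "c * _"] I_alg_mult_right[of "c * _"]) auto
  finally show "c * commutator (g * h) t \<in> I_alg" .
qed

lemma annihilates_commutators_power:
  "c \<in> central_mod_I \<Longrightarrow> annihilates_commutators c g \<Longrightarrow> annihilates_commutators c (g ^ n)"
  by (induction n) (simp_all add: annihilates_commutators_one annihilates_commutators_mult)

lemma central_mod_I_mult_annihilated:
  assumes "c \<in> central_mod_I" "annihilates_commutators c g"
  shows "c * g \<in> central_mod_I"
  using assms unfolding central_mod_I_def annihilates_commutators_def
  by (simp add: commutator_mult_left I_alg_add I_alg_mult_right)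

definition kappa_alg :: "'k::field free_alg \<Rightarrow> 'k free_alg \<Rightarrow> 'k free_alg" where
  "kappa_alg a b = commutator a b * (a ^ (CHAR('k) - 1) * b ^ (CHAR('k) - 1))"

lemma kappa_alg_central_mod_I: "kappa_alg a b \<in> central_mod_I"
proof -
  have "annihilates_commutators (commutator a b) a" "annihilates_commutators (commutator a b) b"
    unfolding annihilates_commutators_def
    using commutator_mult_commutator_left_in_I_alg commutator_mult_commutator_right_in_I_alg
    by blast+
  then show ?thesis
    unfolding kappa_alg_def
    by (intro central_mod_I_mult_annihilated commutator_in_central_mod_I
        annihilates_commutators_mult annihilates_commutators_power)
qed

lemma commutator_power_left:
  "commutator (u ^ Suc n) v - of_nat (Suc n) * (commutator u v * u ^ n) \<in> I_alg"
proof (induction n)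
  case 0
  then show ?case using zero_in_I_alg by simp
next
  case (Suc n)
  have "commutator (u ^ Suc (Suc n)) v - of_nat (Suc (Suc n)) * (commutator u v * u ^ Suc n)
      = u * (commutator (u ^ Suc n) v - of_nat (Suc n) * (commutator u v * u ^ n))
        + of_nat (Suc n) * ((u * commutator u v - commutator u v * u) * u ^ n)"
    by (simp add: commutator_mult_left algebra_simps mult_of_nat_commute)
  also have "\<dots> \<in> I_alg"
    using I_alg_uminus[OF central_mod_I_commute[OF commutator_in_central_mod_I, of u v u]]
    by (intro I_alg_add I_alg_mult_left[OF Suc.IH] I_alg_mult_left[OF I_alg_mult_right])
      simp
  finally show ?case .
qed

lemma commutator_power_right:
  "commutator u (v ^ Suc n) - of_nat (Suc n) * (commutator u v * v ^ n) \<in> I_alg"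
proof -
  have "- (commutator (v ^ Suc n) u - of_nat (Suc n) * (commutator v u * v ^ n))
      = commutator u (v ^ Suc n) - of_nat (Suc n) * (commutator u v * v ^ n)"
    by (simp add: commutator_def algebra_simps)
  then show ?thesis
    using I_alg_uminus[OF commutator_power_left[of v n u]] by simp
qed

section \<open>Elements of \<open>S^2 + T^(3)\<close>\<close>

definition SI_alg :: "'k::field free_alg set" where
  "SI_alg = {s + t |s t. s \<in> S_alg \<and> t \<in> I_alg}"

lemma SI_algI: "s \<in> S_alg \<Longrightarrow> t \<in> I_alg \<Longrightarrow> s + t \<in> SI_alg"
  unfolding SI_alg_def by blast

lemma SI_algE:
  assumes "x \<in> SI_alg"
  obtains s t where "s \<in> S_alg" "t \<in> I_alg" "x = s + t"
  using assms unfolding SI_alg_def by blast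

lemma SI_alg_add:
  fixes x y :: "'k::field free_alg"
  shows "x \<in> SI_alg \<Longrightarrow> y \<in> SI_alg \<Longrightarrow> x + y \<in> SI_alg"
proof (elim SI_algE)
  fix s t s' t' :: "'k free_alg"
  assume "s \<in> S_alg" "t \<in> I_alg" "s' \<in> S_alg" "t' \<in> I_alg"
  then have "(s + s') + (t + t') \<in> SI_alg"
    by (intro SI_algI S_alg_add I_alg_add)
  then show "x = s + t \<Longrightarrow> y = s' + t' \<Longrightarrow> x + y \<in> SI_alg"
    by (simp add: algebra_simps)
qed

lemma SI_alg_scalar_mult: "x \<in> SI_alg \<Longrightarrow> scalar c * x \<in> SI_alg"
  by (elim SI_algE) (simp add: distrib_left SI_algI S_alg_scalar_mult I_alg_mult_left)

lemma SI_alg_add_I_alg: "x \<in> SI_alg \<Longrightarrow> y \<in> I_alg \<Longrightarrow> x + y \<in> SI_alg"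
  by (elim SI_algE) (simp add: add.assoc SI_algI I_alg_add)

lemma S_alg_subset_SI_alg: "x \<in> S_alg \<Longrightarrow> x \<in> SI_alg"
  unfolding SI_alg_def using zero_in_I_alg by force

lemma zero_in_SI_alg: "0 \<in> SI_alg"
  using S_alg_subset_SI_alg[OF commutator_in_S_alg[of 0 0]] by (simp add: commutator_def)

lemma of_nat_neq_0_below_CHAR: "0 < n \<Longrightarrow> n < CHAR('a) \<Longrightarrow> of_nat n \<noteq> (0::'a::semiring_1)"
  by (auto simp: of_nat_eq_0_iff_char_dvd dest: dvd_imp_le)

lemma in_SI_alg_if_commutator_congruent:
  fixes x :: "'k::field free_alg"
  assumes "0 < n" "n < CHAR('k)" "commutator a b - of_nat n * x \<in> I_alg"
  shows "x \<in> SI_alg"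
proof -
  let ?c = "inverse (of_nat n :: 'k)"
  have "x = scalar ?c * commutator a b + - (scalar ?c * (commutator a b - of_nat n * x))"
    using of_nat_neq_0_below_CHAR[OF assms(1,2)]
    by (simp add: algebra_simps flip: mult.assoc scalar_mult scalar_of_nat)
  also have "\<dots> \<in> SI_alg"
    using assms(3)
    by (intro SI_alg_add_I_alg S_alg_subset_SI_alg S_alg_scalar_mult commutator_in_S_alg
        I_alg_uminus I_alg_mult_left)
  finally show ?thesis .
qed

text \<open>
  Since \<open>S^2\<close> is not an ideal, the differences of shifted \<open>\<kappa>\<close>'s are tracked as multipliers
  into \<open>S^2 + T^(3)\<close> of central elements; unlike \<open>S^2 + T^(3)\<close> itself, these are closed under
  multiplication by central elements on both sides, which the telescoping product needs.
\<close>

definition SI_multipliers :: "'k::field free_alg set" where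
  "SI_multipliers = {d. \<forall>z\<in>central_mod_I. d * z \<in> SI_alg}"

lemma zero_in_SI_multipliers: "0 \<in> SI_multipliers"
  unfolding SI_multipliers_def by (simp add: zero_in_SI_alg)

lemma SI_multipliers_add: "x \<in> SI_multipliers \<Longrightarrow> y \<in> SI_multipliers \<Longrightarrow> x + y \<in> SI_multipliers"
  unfolding SI_multipliers_def by (simp add: distrib_right SI_alg_add)

lemma SI_multipliers_scalar_mult: "x \<in> SI_multipliers \<Longrightarrow> scalar c * x \<in> SI_multipliers"
  unfolding SI_multipliers_def by (simp add: mult.assoc SI_alg_scalar_mult)

lemma SI_multipliers_mult_right:
  "x \<in> SI_multipliers \<Longrightarrow> y \<in> central_mod_I \<Longrightarrow> x * y \<in> SI_multipliers"
  unfolding SI_multipliers_def by (simp add: mult.assoc central_mod_I_mult)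

lemma SI_multipliers_mult_left:
  fixes x y :: "'k::field free_alg"
  assumes "x \<in> SI_multipliers" "y \<in> central_mod_I"
  shows "y * x \<in> SI_multipliers"
  unfolding SI_multipliers_def mem_Collect_eq
proof
  fix z :: "'k free_alg" assume "z \<in> central_mod_I"
  then have "x * (z * y) + (y * (x * z) - x * z * y) \<in> SI_alg"
    using assms unfolding SI_multipliers_def
    by (intro SI_alg_add_I_alg central_mod_I_commute) (auto intro: central_mod_I_mult)
  then show "y * x * z \<in> SI_alg"
    by (simp add: algebra_simps)
qed

lemma SI_multipliers_subset_SI_alg: "x \<in> SI_multipliers \<Longrightarrow> x \<in> SI_alg"
  unfolding SI_multipliers_def using one_in_central_mod_I by force

lemma commutator_powers_central_in_SI_alg_left:
  fixes u v z :: "'k::field free_alg"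
  assumes "i < CHAR('k) - 1" "z \<in> central_mod_I"
  shows "commutator u v * (u ^ i * v ^ j) * z \<in> SI_alg"
proof (rule in_SI_alg_if_commutator_congruent)
  have "v ^ j * (v * z) = v * (v ^ j * z)"
    by (simp flip: mult.assoc add: power_commutes)
  then have "commutator (u ^ Suc i * v ^ j * z) v
        - of_nat (Suc i) * (commutator u v * (u ^ i * v ^ j) * z)
      = u ^ Suc i * v ^ j * commutator z v
        + (commutator (u ^ Suc i) v - of_nat (Suc i) * (commutator u v * u ^ i)) * (v ^ j * z)"
    by (simp add: commutator_def algebra_simps power_commutes)
  also have "\<dots> \<in> I_alg"
    using assms(2) unfolding central_mod_I_def
    by (intro I_alg_add I_alg_mult_left I_alg_mult_right[OF commutator_power_left]) auto
  finally show "commutator (u ^ Suc i * v ^ j * z) v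
      - of_nat (Suc i) * (commutator u v * (u ^ i * v ^ j) * z) \<in> I_alg" .
qed (use assms(1) in auto)

lemma commutator_powers_central_in_SI_alg_right:
  fixes u v z :: "'k::field free_alg"
  assumes "j < CHAR('k) - 1" "z \<in> central_mod_I"
  shows "commutator u v * (u ^ i * v ^ j) * z \<in> SI_alg"
proof (rule in_SI_alg_if_commutator_congruent)
  have "u * (u ^ i * w) = u ^ i * (u * w)" for w
    by (simp flip: mult.assoc add: power_commutes)
  then have "commutator u (u ^ i * v ^ Suc j * z)
        - of_nat (Suc j) * (commutator u v * (u ^ i * v ^ j) * z)
      = u ^ i * (commutator u (v ^ Suc j) - of_nat (Suc j) * (commutator u v * v ^ j)) * z
        + u ^ i * v ^ Suc j * commutator u z
        + of_nat (Suc j) * ((u ^ i * commutator u v - commutator u v * u ^ i) * v ^ j * z)"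
    by (simp add: commutator_def algebra_simps mult_of_nat_commute)
  also have "\<dots> \<in> I_alg"
  proof (intro I_alg_add)
    from assms(2) show "u ^ i * v ^ Suc j * commutator u z \<in> I_alg"
      by (intro I_alg_mult_left central_mod_I_commutator_right)
    have "u ^ i * commutator u v - commutator u v * u ^ i \<in> I_alg"
      using I_alg_uminus[OF central_mod_I_commute[OF commutator_in_central_mod_I, of u v "u ^ i"]]
      by simp
    then show "of_nat (Suc j) * ((u ^ i * commutator u v - commutator u v * u ^ i) * v ^ j * z)
        \<in> I_alg"
      by (intro I_alg_mult_left I_alg_mult_right)
  qed (intro I_alg_mult_right I_alg_mult_left commutator_power_right)
  finally show "commutator u (u ^ i * v ^ Suc j * z)
      - of_nat (Suc j) * (commutator u v * (u ^ i * v ^ j) * z) \<in> I_alg" .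
qed (use assms(1) in auto)

lemma commutator_mult_powers_in_SI_multipliers:
  fixes u v :: "'k::field free_alg"
  assumes "i < CHAR('k) - 1 \<or> j < CHAR('k) - 1"
  shows "commutator u v * (u ^ i * v ^ j) \<in> SI_multipliers"
  using assms commutator_powers_central_in_SI_alg_left commutator_powers_central_in_SI_alg_right
  unfolding SI_multipliers_def by blast

section \<open>Shifting the variables by scalars\<close>

inductive_set span_powers :: "'k::field free_alg \<Rightarrow> nat \<Rightarrow> 'k free_alg set" for u n where
  power: "i < n \<Longrightarrow> u ^ i \<in> span_powers u n"
| zero: "0 \<in> span_powers u n"
| add: "x \<in> span_powers u n \<Longrightarrow> y \<in> span_powers u n \<Longrightarrow> x + y \<in> span_powers u n"
| scalar_mult: "x \<in> span_powers u n \<Longrightarrow> scalar c * x \<in> span_powers u n"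

lemma span_powers_mono: "x \<in> span_powers u n \<Longrightarrow> n \<le> m \<Longrightarrow> x \<in> span_powers u m"
  by (induction rule: span_powers.induct) (auto intro: span_powers.intros)

lemma span_powers_mult: "x \<in> span_powers u n \<Longrightarrow> u * x \<in> span_powers u (Suc n)"
  by (induction rule: span_powers.induct)
    (auto simp: distrib_left scalar_mult_left_commute simp flip: power_Suc
      intro: span_powers.intros)

lemma shifted_power_diff_in_span_powers: "(u + scalar a) ^ n - u ^ n \<in> span_powers u n"
proof (induction n)
  case 0
  then show ?case by (simp add: span_powers.zero)
next
  case (Suc n)
  let ?d = "(u + scalar a) ^ n - u ^ n"
  have "(u + scalar a) ^ Suc n - u ^ Suc n = u * ?d + (scalar a * u ^ n + scalar a * ?d)"
    by (simp add: algebra_simps)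
  also have "\<dots> \<in> span_powers u (Suc n)"
    by (intro span_powers.add span_powers_mult span_powers.scalar_mult span_powers.power
        span_powers_mono[OF Suc.IH]) auto
  finally show ?case .
qed

lemma shifted_power_in_span_powers: "(u + scalar a) ^ n \<in> span_powers u (Suc n)"
proof -
  have "(u + scalar a) ^ n = u ^ n + ((u + scalar a) ^ n - u ^ n)"
    by simp
  also have "\<dots> \<in> span_powers u (Suc n)"
    by (intro span_powers.add span_powers.power span_powers_mono[OF shifted_power_diff_in_span_powers])
      auto
  finally show ?thesis .
qed

lemma commutator_mult_span_powers_in_SI_multipliers:
  assumes "E \<in> span_powers u n" "F \<in> span_powers v N"
    and powers: "\<And>i j. i < n \<Longrightarrow> j < N \<Longrightarrow> commutator u v * (u ^ i * v ^ j) \<in> SI_multipliers"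
  shows "commutator u v * (E * F) \<in> SI_multipliers"
  using assms(1)
proof (induction rule: span_powers.induct)
  case (power i)
  from assms(2) show ?case
    by (induction rule: span_powers.induct)
      (auto simp: distrib_left scalar_mult_left_commute
        intro: powers[OF power] zero_in_SI_multipliers SI_multipliers_add SI_multipliers_scalar_mult)
qed (auto simp: distrib_left distrib_right mult.assoc scalar_mult_left_commute
    intro: zero_in_SI_multipliers SI_multipliers_add SI_multipliers_scalar_mult)

lemma commutator_scalar_left: "commutator (scalar c) x = 0"
  by (simp add: commutator_def scalar_mult_commute)

lemma commutator_scalar_right: "commutator x (scalar c) = 0"
  by (simp add: commutator_def scalar_mult_commute)

lemma commutator_shift: "commutator (u + scalar a) (v + scalar b) = commutator u v"
  by (simp add: commutator_add_left commutator_add_right commutator_scalar_left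
      commutator_scalar_right)

lemma kappa_alg_shift_diff_in_SI_multipliers:
  fixes u v :: "'k::field free_alg"
  shows "kappa_alg (u + scalar a) (v + scalar b) - kappa_alg u v \<in> SI_multipliers"
proof -
  let ?q = "CHAR('k) - 1" and ?u' = "u + scalar a" and ?v' = "v + scalar b"
  have "kappa_alg ?u' ?v' - kappa_alg u v
      = commutator u v * ((?u' ^ ?q - u ^ ?q) * ?v' ^ ?q)
        + commutator u v * (u ^ ?q * (?v' ^ ?q - v ^ ?q))"
    unfolding kappa_alg_def commutator_shift by (simp add: algebra_simps)
  also have "\<dots> \<in> SI_multipliers"
    by (intro SI_multipliers_add
        commutator_mult_span_powers_in_SI_multipliers[OF shifted_power_diff_in_span_powers
          shifted_power_in_span_powers commutator_mult_powers_in_SI_multipliers]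
        commutator_mult_span_powers_in_SI_multipliers[OF span_powers.power[OF lessI]
          shifted_power_diff_in_span_powers commutator_mult_powers_in_SI_multipliers])
      simp_all
  finally show ?thesis .
qed

lemma prod_list_diff_in_SI_multipliers:
  assumes "\<And>r. r \<in> set rs \<Longrightarrow> f r \<in> central_mod_I \<and> g r \<in> central_mod_I \<and> f r - g r \<in> SI_multipliers"
  shows "prod_list (map f rs) - prod_list (map g rs) \<in> SI_multipliers"
  using assms
proof (induction rs)
  case Nil
  then show ?case by (simp add: zero_in_SI_multipliers)
next
  case (Cons r rs)
  have "prod_list (map f (r # rs)) - prod_list (map g (r # rs))
      = (f r - g r) * prod_list (map f rs) + g r * (prod_list (map f rs) - prod_list (map g rs))"
    by (simp add: algebra_simps)
  also have "\<dots> \<in> SI_multipliers"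
    using Cons by (intro SI_multipliers_add SI_multipliers_mult_right SI_multipliers_mult_left
        central_mod_I_prod_list) auto
  finally show ?case .
qed

definition w_alg :: "nat \<Rightarrow> (nat \<Rightarrow> 'k::field free_alg) \<Rightarrow> 'k free_alg" where
  "w_alg m y = prod_list (map (\<lambda>r. kappa_alg (y (2 * r - 1)) (y (2 * r))) [1..<m + 1])"

lemma w_alg_shift_diff_in_SI_alg: "w_alg m (\<lambda>j. y j + scalar (\<alpha> j)) - w_alg m y \<in> SI_alg"
  unfolding w_alg_def
  by (intro SI_multipliers_subset_SI_alg prod_list_diff_in_SI_multipliers conjI
      kappa_alg_central_mod_I kappa_alg_shift_diff_in_SI_multipliers)

lemma Rep_free_alg_w_alg: "Rep_free_alg (w_alg m y) = w_gen m (\<lambda>j. Rep_free_alg (y j))"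
  by (simp add: w_alg_def w_gen_def kappa_alg_def kappa_def Rep_free_alg_prod_list
      times_free_alg.rep_eq Rep_free_alg_power Rep_free_alg_commutator comp_def)

lemma Rep_free_alg_SI_alg: "x \<in> SI_alg \<Longrightarrow> Rep_free_alg x \<in> set_sum S2 T3"
  unfolding SI_alg_def S_alg_def I_alg_def set_sum_def by (force simp: plus_free_alg.rep_eq)

text \<open>
  The argument uses only that \<open>1, \<dots>, p - 1\<close> are invertible in \<open>k\<close>.
\<close>

theorem lemma3p1:
  fixes \<alpha> :: "nat \<Rightarrow> 'k::field" and m :: nat
  assumes "prime CHAR('k)" and "CHAR('k) > 2" and "m \<ge> 1"
  shows "fa_sub (w_gen m (\<lambda>j. fa_add (fa_var j) (fa_smul (\<alpha> j) fa_one))) (w_gen m fa_var)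
           \<in> set_sum S2 T3"
proof -
  have "fa_sub (w_gen m (\<lambda>j. fa_add (fa_var j) (fa_smul (\<alpha> j) fa_one))) (w_gen m fa_var)
      = Rep_free_alg (w_alg m (\<lambda>j. var j + scalar (\<alpha> j)) - w_alg m var)"
    by (simp add: Rep_free_alg_w_alg minus_free_alg.rep_eq plus_free_alg.rep_eq var.rep_eq
        scalar.rep_eq)
  also have "\<dots> \<in> set_sum S2 T3"
    by (intro Rep_free_alg_SI_alg w_alg_shift_diff_in_SI_alg)
  finally show ?thesis .
qed

end
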